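(* Let $f:\mathbb{R}^n\to\mathbb{R}$ be twice continuously differentiable with $L$-Lipschitz gradient, let $\alpha\in(0,\frac1L)$, and let $x^*$ be a strict saddle point of $f$. Then the Jacobian $Dg_{\alpha f}(x^* )$ of $g_{\alpha f}=g_{\alpha f}^p\circ\cdots\circ g_{\alpha f}^1$ at $x^*$ has at least one eigenvalue whose modulus is strictly greater than one.
   Context: $\|\nabla f(x)-\nabla f(y)\|\le L\|x-y\|$ for all $x,y$, $L>0$. The variable is partitioned as $x=(x(1),\dots,x(p))$, $x(s)\in\mathbb{R}^{n_s}$, $\sum_s n_s=n$; $U_s\in\mathbb{R}^{n\times n_s}$ is the $s$-th block-column of $I_n$ and $\nabla_sf(x)=U_s^T\nabla f(x)$. For $\alpha>0$, $g_{\alpha f}^s(x)=x-\alpha U_s\nabla_s f(x)$. A strict saddle point is a point $x^*$ with $\nabla f(x^* )=0$ and $\lambda_{\min}(\nabla^2 f(x^* ))<0$. *)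

theory Defs
  imports "HOL-Analysis.Analysis"
begin

definition twice_cont_diff :: "(real^'n \<Rightarrow> real) \<Rightarrow> (real^'n \<Rightarrow> real^'n) \<Rightarrow> bool" where
  "twice_cont_diff f gf \<longleftrightarrow>
     (\<forall>x. GDERIV f x :> gf x) \<and> (\<forall>x. gf differentiable (at x)) \<and>
     continuous_on UNIV (\<lambda>x. jacobian gf (at x))"

definition lipschitz_grad :: "real \<Rightarrow> (real^'n \<Rightarrow> real^'n) \<Rightarrow> bool" where
  "lipschitz_grad L gf \<longleftrightarrow> (\<forall>x y. norm (gf x - gf y) \<le> L * norm (x - y))"

definition real_eigenvalue :: "real^'n^'n \<Rightarrow> real \<Rightarrow> bool" where
  "real_eigenvalue A \<mu> \<longleftrightarrow> (\<exists>v. v \<noteq> 0 \<and> A *v v = \<mu> *s v)"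

definition lambda_min :: "real^'n^'n \<Rightarrow> real" where
  "lambda_min A = Min {\<mu>. real_eigenvalue A \<mu>}"

definition complex_eigenvalue :: "real^'n^'n \<Rightarrow> complex \<Rightarrow> bool" where
  "complex_eigenvalue A \<mu> \<longleftrightarrow>
     (\<exists>v::complex^'n. v \<noteq> 0 \<and> map_matrix complex_of_real A *v v = \<mu> *s v)"

definition strict_saddle :: "(real^'n \<Rightarrow> real^'n) \<Rightarrow> real^'n \<Rightarrow> bool" where
  "strict_saddle gf x \<longleftrightarrow> gf x = 0 \<and> lambda_min (jacobian gf (at x)) < 0"

text \<open>Block of coordinates B: U_B grad_B f(x) is the gradient with coordinates outside B zeroed.\<close>
definition block_step :: "real \<Rightarrow> (real^'n \<Rightarrow> real^'n) \<Rightarrow> 'n set \<Rightarrow> real^'n \<Rightarrow> real^'n" where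
  "block_step \<alpha> gf B x = x - \<alpha> *\<^sub>R (\<chi> i. if i \<in> B then gf x $ i else 0)"

text \<open>g = g^p o ... o g^1 for the block list [B_1, ..., B_p] (g^1 applied first).\<close>
definition block_map :: "real \<Rightarrow> (real^'n \<Rightarrow> real^'n) \<Rightarrow> 'n set list \<Rightarrow> real^'n \<Rightarrow> real^'n" where
  "block_map \<alpha> gf Bs x = fold (\<lambda>B y. block_step \<alpha> gf B y) Bs x"

definition block_partition :: "'n set list \<Rightarrow> bool" where
  "block_partition Bs \<longleftrightarrow> (\<Union>(set Bs) = UNIV) \<and> (\<forall>B\<in>set Bs. B \<noteq> {}) \<and>
     (\<forall>i<length Bs. \<forall>j<length Bs. i \<noteq> j \<longrightarrow> Bs ! i \<inter> Bs ! j = {})"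

end

theory Submission
  imports Defs "Jordan_Normal_Form.Spectral_Radius" "HOL-Real_Asymp.Real_Asymp"
begin

(* At a critical point x* every block step fixes x*, so the Jacobian of the sweep is the same
   sweep applied to the linear map y \<mapsto> H y, where H is the Hessian; H is symmetric and bounded by L.
   Because \<alpha> L < 2, each block step lowers the quadratic form q(y) = y \<bullet> H y by a multiple of its
   squared length, and since the blocks cover all coordinates a full sweep lowers q by a fixed
   fraction of |H y|^2, hence by a fixed fraction of -q(y). Started at an eigenvector of the negative
   eigenvalue \<lambda>_min, -q and therefore |T^k y|^2 grow geometrically. If no eigenvalue of the
   Jacobian T had modulus above one, the Jordan normal form would bound |T^k y| by a polynomial
   in k: a contradiction. *)

section \<open>Symmetry of the Hessian\<close>

definition second_difference :: "('a::real_vector \<Rightarrow> real) \<Rightarrow> 'a \<Rightarrow> 'a \<Rightarrow> 'a \<Rightarrow> real \<Rightarrow> real" where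
  "second_difference f x u v t = f (x + t *\<^sub>R v + t *\<^sub>R u) - f (x + t *\<^sub>R u) - f (x + t *\<^sub>R v) + f x"

lemma second_difference_commute: "second_difference f x u v t = second_difference f x v u t"
  unfolding second_difference_def by (simp add: algebra_simps)

lemma has_real_derivative_along_line:
  fixes f :: "'a::real_inner \<Rightarrow> real"
  assumes "\<And>x. GDERIV f x :> gf x"
  shows "((\<lambda>s. f (x + s *\<^sub>R u)) has_real_derivative (u \<bullet> gf (x + s *\<^sub>R u))) (at s)"
proof -
  have "((\<lambda>s. x + s *\<^sub>R u) has_derivative (\<lambda>h. h *\<^sub>R u)) (at s)"
    by (auto intro!: derivative_eq_intros)
  from has_derivative_compose[OF this assms[unfolded gderiv_def]]
  show ?thesis by (simp add: has_field_derivative_def mult_commute_abs)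
qed

lemma second_difference_mean_value:
  fixes f :: "'a::real_inner \<Rightarrow> real"
  assumes grad: "\<And>x. GDERIV f x :> gf x" and "t > 0"
  shows "\<exists>z. 0 < z \<and> z < t \<and>
           second_difference f x u v t = t * (u \<bullet> (gf (x + t *\<^sub>R v + z *\<^sub>R u) - gf (x + z *\<^sub>R u)))"
proof -
  define \<phi> where "\<phi> s = f (x + t *\<^sub>R v + s *\<^sub>R u) - f (x + s *\<^sub>R u)" for s
  define \<phi>' where "\<phi>' s = u \<bullet> gf (x + t *\<^sub>R v + s *\<^sub>R u) - u \<bullet> gf (x + s *\<^sub>R u)" for s
  have "DERIV \<phi> s :> \<phi>' s" for s
    unfolding \<phi>_def \<phi>'_def by (intro DERIV_diff has_real_derivative_along_line grad)
  then obtain z where "0 < z" "z < t" and "\<phi> t - \<phi> 0 = t * \<phi>' z"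
    using MVT2[of 0 t \<phi> \<phi>'] \<open>t > 0\<close> by auto
  moreover have "second_difference f x u v t = \<phi> t - \<phi> 0"
    unfolding second_difference_def \<phi>_def by simp
  ultimately show ?thesis unfolding \<phi>'_def by (auto simp: inner_diff_right)
qed

lemma second_difference_approx:
  fixes f :: "'a::real_inner \<Rightarrow> real"
  assumes grad: "\<And>x. GDERIV f x :> gf x" and D: "(gf has_derivative D) (at x)" and "\<epsilon> > 0"
  shows "\<exists>\<delta>>0. \<forall>t. 0 < t \<longrightarrow> t < \<delta> \<longrightarrow>
           \<bar>second_difference f x u v t - t\<^sup>2 * (u \<bullet> D v)\<bar> \<le> \<epsilon> * t\<^sup>2"
proof -
  interpret D: bounded_linear D using D by (rule has_derivative_bounded_linear)
  define K where "K = 2 * norm u * (norm u + norm v) + 1"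
  have K: "K > 0" unfolding K_def by (simp add: add_nonneg_pos)
  define r where "r y = gf y - gf x - D (y - x)" for y
  obtain d where d: "d > 0" and rd: "\<And>y. norm (y - x) < d \<Longrightarrow> norm (r y) \<le> \<epsilon> / K * norm (y - x)"
    using D \<open>\<epsilon> > 0\<close> K unfolding has_derivative_at_alt r_def by (meson divide_pos_pos)
  define \<delta> where "\<delta> = d / (norm u + norm v + 1)"
  have "\<delta> > 0" unfolding \<delta>_def using d by (simp add: add_nonneg_pos)
  moreover have "\<bar>second_difference f x u v t - t\<^sup>2 * (u \<bullet> D v)\<bar> \<le> \<epsilon> * t\<^sup>2"
    if t: "0 < t" "t < \<delta>" for t
  proof -
    define \<rho> where "\<rho> = t * (norm u + norm v)"
    have "t * (norm u + norm v + 1) < d"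
      using t unfolding \<delta>_def by (simp add: pos_less_divide_eq add_nonneg_pos)
    hence "\<rho> < d" unfolding \<rho>_def using t by (simp add: algebra_simps)
    hence r_small: "norm (r y) \<le> \<epsilon> / K * \<rho>" if "norm (y - x) \<le> \<rho>" for y
      using rd[of y] that \<open>\<epsilon> > 0\<close> K by (smt (verit) divide_pos_pos mult_left_mono)
    obtain z where z: "0 < z" "z < t" and mvt:
        "second_difference f x u v t = t * (u \<bullet> (gf (x + t *\<^sub>R v + z *\<^sub>R u) - gf (x + z *\<^sub>R u)))"
      using second_difference_mean_value[OF grad t(1)] by blast
    define p1 where "p1 = x + t *\<^sub>R v + z *\<^sub>R u"
    define p2 where "p2 = x + z *\<^sub>R u"
    have "z * norm u \<le> t * norm u" "0 \<le> t * norm v" using z by (simp_all add: mult_right_mono)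
    moreover have "norm (p1 - x) \<le> t * norm v + z * norm u"
      unfolding p1_def using norm_triangle_ineq[of "t *\<^sub>R v" "z *\<^sub>R u"] z t by simp
    moreover have "norm (p2 - x) = z * norm u" unfolding p2_def using z by simp
    ultimately have "norm (p1 - x) \<le> \<rho>" "norm (p2 - x) \<le> \<rho>"
      unfolding \<rho>_def distrib_left by linarith+
    hence "norm (r p1) + norm (r p2) \<le> 2 * (\<epsilon> / K * \<rho>)"
      using r_small[of p1] r_small[of p2] by linarith
    hence "norm u * (norm (r p1) + norm (r p2)) \<le> norm u * (2 * (\<epsilon> / K * \<rho>))"
      by (rule mult_left_mono) simp
    also have "\<dots> = \<epsilon> * t * ((K - 1) / K)"
      unfolding \<rho>_def K_def by (simp add: field_simps)
    also have "\<dots> \<le> \<epsilon> * t" using K t \<open>\<epsilon> > 0\<close> by (simp add: field_simps)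
    finally have "\<bar>u \<bullet> (r p1 - r p2)\<bar> \<le> \<epsilon> * t"
      by (meson Cauchy_Schwarz_ineq2 mult_left_mono norm_ge_zero norm_triangle_ineq4 order_trans)
    have "gf p1 - gf p2 = t *\<^sub>R D v + (r p1 - r p2)"
      unfolding r_def p1_def p2_def by (simp add: D.diff D.add D.scaleR algebra_simps)
    hence "second_difference f x u v t - t\<^sup>2 * (u \<bullet> D v) = t * (u \<bullet> (r p1 - r p2))"
      unfolding mvt p1_def[symmetric] p2_def[symmetric]
      by (simp add: power2_eq_square inner_add_right distrib_left)
    hence "\<bar>second_difference f x u v t - t\<^sup>2 * (u \<bullet> D v)\<bar> = t * \<bar>u \<bullet> (r p1 - r p2)\<bar>"
      using t by (simp add: abs_mult)
    also have "\<dots> \<le> t * (\<epsilon> * t)" using \<open>\<bar>u \<bullet> (r p1 - r p2)\<bar> \<le> \<epsilon> * t\<close> t by simp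
    finally show ?thesis by (simp add: power2_eq_square mult_ac)
  qed
  ultimately show ?thesis by blast
qed

lemma gradient_derivative_symmetric:
  fixes f :: "'a::real_inner \<Rightarrow> real" and D :: "'a \<Rightarrow> 'a"
  assumes grad: "\<And>x. GDERIV f x :> gf x" and D: "(gf has_derivative D) (at x)"
  shows "D u \<bullet> v = u \<bullet> D v"
proof -
  have "\<bar>u \<bullet> D v - v \<bullet> D u\<bar> \<le> 0 + \<epsilon>" if "\<epsilon> > 0" for \<epsilon>
  proof -
    obtain d1 where "d1 > 0" and d1: "\<And>t. 0 < t \<Longrightarrow> t < d1 \<Longrightarrow>
        \<bar>second_difference f x u v t - t\<^sup>2 * (u \<bullet> D v)\<bar> \<le> \<epsilon> / 2 * t\<^sup>2"
      using second_difference_approx[OF grad D, of "\<epsilon> / 2" u v] \<open>\<epsilon> > 0\<close> by auto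
    obtain d2 where "d2 > 0" and d2: "\<And>t. 0 < t \<Longrightarrow> t < d2 \<Longrightarrow>
        \<bar>second_difference f x v u t - t\<^sup>2 * (v \<bullet> D u)\<bar> \<le> \<epsilon> / 2 * t\<^sup>2"
      using second_difference_approx[OF grad D, of "\<epsilon> / 2" v u] \<open>\<epsilon> > 0\<close> by auto
    define t where "t = min d1 d2 / 2"
    have t: "0 < t" "t < d1" "t < d2" unfolding t_def using \<open>d1 > 0\<close> \<open>d2 > 0\<close> by auto
    have "t\<^sup>2 * \<bar>u \<bullet> D v - v \<bullet> D u\<bar> = \<bar>t\<^sup>2 * (u \<bullet> D v) - t\<^sup>2 * (v \<bullet> D u)\<bar>"
      by (simp add: abs_mult flip: right_diff_distrib)
    also have "\<dots> \<le> t\<^sup>2 * \<epsilon>"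
    proof -
      have "\<epsilon> / 2 * t\<^sup>2 + \<epsilon> / 2 * t\<^sup>2 = t\<^sup>2 * \<epsilon>" by simp
      thus ?thesis using d1[OF t(1,2)] d2[OF t(1,3)] second_difference_commute[of f x u v t]
        by linarith
    qed
    finally show ?thesis using t by simp
  qed
  hence "u \<bullet> D v = v \<bullet> D u" using field_le_epsilon[of "\<bar>u \<bullet> D v - v \<bullet> D u\<bar>" 0] by simp
  thus ?thesis by (simp add: inner_commute)
qed

lemma has_derivative_norm_le_lipschitz:
  fixes g :: "'a::real_normed_vector \<Rightarrow> 'b::real_normed_vector"
  assumes g': "(g has_derivative g') (at x)" and lip: "\<And>x y. norm (g x - g y) \<le> L * norm (x - y)"
  shows "norm (g' v) \<le> L * norm v"
proof (rule field_le_epsilon)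
  interpret g': bounded_linear g' using g' by (rule has_derivative_bounded_linear)
  fix e :: real assume "e > 0"
  define e' where "e' = e / (norm v + 1)"
  have "e' > 0" unfolding e'_def using \<open>e > 0\<close> by (simp add: add_nonneg_pos)
  then obtain d where "d > 0"
    and d: "\<And>y. norm (y - x) < d \<Longrightarrow> norm (g y - g x - g' (y - x)) \<le> e' * norm (y - x)"
    using g' unfolding has_derivative_at_alt by blast
  define s where "s = d / (norm v + 1)"
  have "s > 0" unfolding s_def using \<open>d > 0\<close> by (simp add: add_nonneg_pos)
  have "norm (s *\<^sub>R v) = d * (norm v / (norm v + 1))"
    unfolding s_def using \<open>d > 0\<close> by (simp add: add_nonneg_pos)
  also have "\<dots> < d * 1"
    by (rule mult_strict_left_mono) (simp_all add: \<open>d > 0\<close> divide_less_eq add_nonneg_pos)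
  finally have "norm (s *\<^sub>R v) < d" by simp
  have "s * norm (g' v) = norm (g' (s *\<^sub>R v))" using \<open>s > 0\<close> by (simp add: g'.scaleR)
  also have "\<dots> \<le> norm (g (x + s *\<^sub>R v) - g x) + norm (g (x + s *\<^sub>R v) - g x - g' (s *\<^sub>R v))"
    using norm_triangle_ineq4[of "g (x + s *\<^sub>R v) - g x" "g (x + s *\<^sub>R v) - g x - g' (s *\<^sub>R v)"]
    by simp
  also have "\<dots> \<le> L * norm (s *\<^sub>R v) + e' * norm (s *\<^sub>R v)"
    using lip[of "x + s *\<^sub>R v" x] d[of "x + s *\<^sub>R v"] \<open>norm (s *\<^sub>R v) < d\<close> by simp
  also have "\<dots> = s * (L * norm v + e' * norm v)" using \<open>s > 0\<close> by (simp add: algebra_simps)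
  also have "e' * norm v \<le> e"
    unfolding e'_def using \<open>e > 0\<close> by (simp add: divide_le_eq add_nonneg_pos)
  finally show "norm (g' v) \<le> L * norm v + e" using \<open>s > 0\<close> by (simp add: mult_le_cancel_left_pos)
qed

section \<open>Block sweeps and their linearization\<close>

definition block_restrict :: "'n set \<Rightarrow> real^'n \<Rightarrow> real^'n" where
  "block_restrict B v = (\<chi> i. if i \<in> B then v $ i else 0)"

lemma block_step_eq: "block_step a gf B x = x - a *\<^sub>R block_restrict B (gf x)"
  unfolding block_step_def block_restrict_def ..

lemma block_map_Cons: "block_map a gf (B # Bs) x = block_map a gf Bs (block_step a gf B x)"
  unfolding block_map_def by simp

lemma bounded_linear_block_restrict: "bounded_linear (block_restrict B)"
  unfolding linear_conv_bounded_linear[symmetric]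
  by (rule linearI) (simp_all add: block_restrict_def Finite_Cartesian_Product.vec_eq_iff)

lemma inner_block_restrict: "block_restrict B v \<bullet> v = (norm (block_restrict B v))\<^sup>2"
  unfolding block_restrict_def power2_norm_eq_inner inner_vec_def by (intro sum.cong) auto

lemma power2_norm_block_restrict: "(norm (block_restrict B v))\<^sup>2 = (\<Sum>i\<in>B. (v $ i)\<^sup>2)"
proof -
  have "(norm (block_restrict B v))\<^sup>2 = (\<Sum>i\<in>UNIV. if i \<in> B then (v $ i)\<^sup>2 else 0)"
    unfolding block_restrict_def power2_norm_eq_inner inner_vec_def
    by (rule sum.cong) (simp_all add: power2_eq_square)
  thus ?thesis by (simp add: sum.If_cases)
qed

lemma norm_le_sum_block_restrict:
  assumes "\<Union>(set Bs) = UNIV"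
  shows "(norm v)\<^sup>2 \<le> (\<Sum>B\<in>set Bs. (norm (block_restrict B v))\<^sup>2)"
proof -
  have "(norm v)\<^sup>2 = (\<Sum>i\<in>UNIV. (v $ i)\<^sup>2)"
    unfolding power2_norm_eq_inner inner_vec_def by (simp add: power2_eq_square)
  also have "\<dots> \<le> (\<Sum>i\<in>UNIV. \<Sum>B\<in>set Bs. if i \<in> B then (v $ i)\<^sup>2 else 0)"
  proof (rule sum_mono)
    fix i
    have "i \<in> \<Union>(set Bs)" using assms by simp
    then obtain B where "B \<in> set Bs" "i \<in> B" by blast
    thus "(v $ i)\<^sup>2 \<le> (\<Sum>B\<in>set Bs. if i \<in> B then (v $ i)\<^sup>2 else 0)"
      using member_le_sum[of B "set Bs" "\<lambda>B. if i \<in> B then (v $ i)\<^sup>2 else 0"] by simp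
  qed
  also have "\<dots> = (\<Sum>B\<in>set Bs. \<Sum>i\<in>UNIV. if i \<in> B then (v $ i)\<^sup>2 else 0)"
    by (rule sum.swap)
  also have "\<dots> = (\<Sum>B\<in>set Bs. (norm (block_restrict B v))\<^sup>2)"
    by (simp add: power2_norm_block_restrict sum.If_cases)
  finally show ?thesis .
qed

lemma norm_block_restrict_le: "norm (block_restrict B v) \<le> norm v"
proof -
  have "(norm (block_restrict B v))\<^sup>2 \<le> (\<Sum>i\<in>UNIV. (v $ i)\<^sup>2)"
    unfolding power2_norm_block_restrict by (rule sum_mono2) auto
  also have "\<dots> = (norm v)\<^sup>2"
    unfolding power2_norm_eq_inner inner_vec_def by (simp add: power2_eq_square)
  finally show ?thesis by (simp add: power_mono_iff)
qed

lemma has_derivative_block_step: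
  assumes "(gf has_derivative D) (at x)"
  shows "(block_step a gf B has_derivative block_step a D B) (at x)"
  unfolding block_step_eq[abs_def]
  using bounded_linear.has_derivative[OF bounded_linear_block_restrict assms]
  by (auto intro!: derivative_eq_intros)

lemma has_derivative_block_map:
  assumes "(gf has_derivative D) (at x)" and "gf x = 0"
  shows "(block_map a gf Bs has_derivative block_map a D Bs) (at x)"
proof (induction Bs)
  case Nil
  show ?case by (simp add: block_map_def has_derivative_ident)
next
  case (Cons B Bs)
  have "block_step a gf B x = x"
    using assms(2) by (simp add: block_step_eq block_restrict_def Finite_Cartesian_Product.vec_eq_iff)
  with Cons.IH have "(block_map a gf Bs has_derivative block_map a D Bs) (at (block_step a gf B x))"
    by simp
  from has_derivative_compose[OF has_derivative_block_step[OF assms(1)] this]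
  show ?case by (simp add: block_map_Cons[abs_def])
qed

lemma jacobian_block_map:
  assumes "(gf has_derivative D) (at x)" and "gf x = 0"
  shows "jacobian (block_map a gf Bs) (at x) *v v = block_map a D Bs v"
proof -
  note deriv = has_derivative_block_map[OF assms]
  hence "(block_map a gf Bs has_derivative (*v) (jacobian (block_map a gf Bs) (at x))) (at x)"
    using jacobian_works differentiableI by blast
  from has_derivative_unique[OF this deriv] show ?thesis by simp
qed

section \<open>Descent of the quadratic form along a sweep\<close>

lemma symmetric_operator_quadratic_le_norm_image:
  fixes D :: "'a::euclidean_space \<Rightarrow> 'a"
  assumes lin: "linear D" and sym: "\<And>u v. D u \<bullet> v = u \<bullet> D v"
  shows "\<exists>k>0. \<forall>y. - (y \<bullet> D y) \<le> k * (norm (D y))\<^sup>2"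
proof -
  note subR = linear_subspace_image[OF lin subspace_UNIV]
  have "\<forall>x\<in>range D. D x = 0 \<longrightarrow> x = 0"
  proof (intro ballI impI)
    fix x assume "x \<in> range D" "D x = 0"
    then obtain w where "x = D w" by blast
    hence "x \<bullet> x = w \<bullet> D x" using sym[of w x] by simp
    thus "x = 0" using \<open>D x = 0\<close> by simp
  qed
  then obtain e where "e > 0" and e: "\<And>x. x \<in> range D \<Longrightarrow> e * norm x \<le> norm (D x)"
    using injective_imp_isometric[OF closed_subspace[OF subR] subR] lin
    by (metis linear_conv_bounded_linear)
  have "- (y \<bullet> D y) \<le> 1 / e * (norm (D y))\<^sup>2" for y
  proof -
    obtain a b where "a \<in> span (range D)" and b: "\<And>w. w \<in> span (range D) \<Longrightarrow> real_inner_class.orthogonal b w"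
      and "y = a + b"
      using orthogonal_subspace_decomp_exists by blast
    have "a \<in> range D" using \<open>a \<in> span (range D)\<close> subR by (metis span_eq_iff)
    have "D b \<bullet> D b = b \<bullet> D (D b)" using sym by simp
    also have "\<dots> = 0" using b[of "D (D b)"] by (simp add: span_base real_inner_class.orthogonal_def)
    finally have "D b = 0" by simp
    hence Dy: "D y = D a" using \<open>y = a + b\<close> by (simp add: linear_add[OF lin])
    have "y \<bullet> D y = a \<bullet> D a"
      using sym[of b a] \<open>D b = 0\<close> unfolding \<open>y = a + b\<close>
      by (simp add: inner_add_left linear_add[OF lin])
    hence "- (y \<bullet> D y) \<le> norm a * norm (D a)"
      using norm_cauchy_schwarz[of "-a" "D a"] by simp
    also have "\<dots> \<le> norm (D a) / e * norm (D a)"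
      using e[OF \<open>a \<in> range D\<close>] \<open>e > 0\<close> by (intro mult_right_mono) (simp_all add: field_simps)
    finally show ?thesis unfolding Dy by (simp add: power2_eq_square)
  qed
  thus ?thesis using \<open>e > 0\<close> by (intro exI[of _ "1 / e"]) auto
qed

lemma power2_norm_add_le: "(norm (x + z))\<^sup>2 \<le> 2 * (norm x)\<^sup>2 + 2 * (norm (z::'a::real_normed_vector))\<^sup>2"
proof -
  have "(norm (x + z))\<^sup>2 \<le> (norm x + norm z)\<^sup>2" by (simp add: norm_triangle_ineq power_mono)
  also have "\<dots> \<le> 2 * (norm x)\<^sup>2 + 2 * (norm z)\<^sup>2"
    using zero_le_power2[of "norm x - norm z"] by (simp add: power2_eq_square algebra_simps)
  finally show ?thesis .
qed

locale bounded_symmetric_operator =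
  fixes D :: "real^'n \<Rightarrow> real^'n" and L :: real
  assumes linear: "linear D"
    and symmetric: "D u \<bullet> v = u \<bullet> D v"
    and norm_le: "norm (D v) \<le> L * norm v"
begin

lemma neg_quadratic_le: "- (y \<bullet> D y) \<le> L * (norm y)\<^sup>2"
proof -
  have "- (y \<bullet> D y) \<le> norm y * norm (D y)" using norm_cauchy_schwarz[of "-y" "D y"] by simp
  also have "\<dots> \<le> norm y * (L * norm y)" by (intro mult_left_mono norm_le) simp
  finally show ?thesis by (simp add: power2_eq_square algebra_simps)
qed

lemma block_step_descent:
  assumes "a > 0"
  shows "block_step a D B y \<bullet> D (block_step a D B y)
           \<le> y \<bullet> D y - (2 / a - L) * (norm (block_step a D B y - y))\<^sup>2"
proof -
  define p where "p = block_restrict B (D y)"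
  define d where "d = a *\<^sub>R p"
  have step: "block_step a D B y = y - d" unfolding block_step_eq d_def p_def ..
  have "(y - d) \<bullet> D (y - d) = y \<bullet> D y - 2 * (d \<bullet> D y) + d \<bullet> D d"
    using symmetric[of y d]
    by (simp add: linear_diff[OF linear] inner_diff_left inner_diff_right inner_commute)
  moreover have "d \<bullet> D y = a * (norm p)\<^sup>2"
    unfolding d_def p_def using inner_block_restrict[of B "D y"] by simp
  moreover have "d \<bullet> D d \<le> L * (norm d)\<^sup>2"
  proof -
    have "d \<bullet> D d \<le> norm d * norm (D d)" by (rule norm_cauchy_schwarz)
    also have "\<dots> \<le> norm d * (L * norm d)" by (intro mult_left_mono norm_le) simp
    finally show ?thesis by (simp add: power2_eq_square algebra_simps)
  qed
  moreover have "(norm d)\<^sup>2 = a\<^sup>2 * (norm p)\<^sup>2"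
    unfolding d_def using \<open>a > 0\<close> by (simp add: power_mult_distrib)
  ultimately have "(y - d) \<bullet> D (y - d) \<le> y \<bullet> D y - 2 * a * (norm p)\<^sup>2 + L * (a\<^sup>2 * (norm p)\<^sup>2)"
    by simp
  also have "\<dots> = y \<bullet> D y - (2 / a - L) * (a\<^sup>2 * (norm p)\<^sup>2)"
    using \<open>a > 0\<close> by (simp add: field_simps power2_eq_square)
  finally show ?thesis unfolding step using \<open>(norm d)\<^sup>2 = _\<close> by simp
qed

lemma power2_norm_block_step_diff:
  assumes "a > 0"
  shows "(norm (block_step a D B y - y))\<^sup>2 = a\<^sup>2 * (norm (block_restrict B (D y)))\<^sup>2"
  unfolding block_step_eq using assms by (simp add: power_mult_distrib)

lemma power2_norm_block_restrict_shift_le: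
  "(norm (block_restrict B (D y)))\<^sup>2 \<le> 2 * (norm (block_restrict B (D z)))\<^sup>2 + 2 * L\<^sup>2 * (norm (z - y))\<^sup>2"
proof -
  have "block_restrict B (D y) = block_restrict B (D z) + block_restrict B (D (y - z))"
    by (simp add: linear_diff[OF linear] block_restrict_def Finite_Cartesian_Product.vec_eq_iff)
  hence "(norm (block_restrict B (D y)))\<^sup>2
           \<le> 2 * (norm (block_restrict B (D z)))\<^sup>2 + 2 * (norm (block_restrict B (D (y - z))))\<^sup>2"
    by (metis power2_norm_add_le)
  moreover have "norm (block_restrict B (D (y - z))) \<le> L * norm (z - y)"
    using norm_block_restrict_le norm_le[of "y - z"] by (metis norm_minus_commute order_trans)
  hence "(norm (block_restrict B (D (y - z))))\<^sup>2 \<le> L\<^sup>2 * (norm (z - y))\<^sup>2"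
    by (simp add: power_mono flip: power_mult_distrib)
  ultimately show ?thesis by linarith
qed

lemma block_map_descent:
  assumes "a > 0" and "a * L < 2"
  shows "\<exists>A\<ge>0. \<forall>y. block_map a D Bs y \<bullet> D (block_map a D Bs y) \<le> y \<bullet> D y \<and>
           (\<forall>B\<in>set Bs. (norm (block_restrict B (D y)))\<^sup>2
              \<le> A * (y \<bullet> D y - block_map a D Bs y \<bullet> D (block_map a D Bs y)))"
proof (induction Bs)
  case Nil
  show ?case by (intro exI[of _ 0]) (simp add: block_map_def)
next
  case (Cons B Bs)
  define Q where "Q y = y \<bullet> D y" for y
  define T where "T = block_map a D Bs"
  obtain A where "A \<ge> 0" and T_le: "\<And>y. Q (T y) \<le> Q y"
    and IH: "\<And>y B'. B' \<in> set Bs \<Longrightarrow> (norm (block_restrict B' (D y)))\<^sup>2 \<le> A * (Q y - Q (T y))"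
    using Cons.IH unfolding Q_def T_def by blast
  define c where "c = 2 / a - L"
  have "c > 0" unfolding c_def using assms by (simp add: field_simps)
  define A' where "A' = 1 / (c * a\<^sup>2) + 2 * A + 2 * L\<^sup>2 / c"
  have "A' \<ge> 0" unfolding A'_def using \<open>c > 0\<close> \<open>A \<ge> 0\<close> by simp
  moreover have "Q (T (block_step a D B y)) \<le> Q y \<and>
      (\<forall>B'\<in>set (B # Bs). (norm (block_restrict B' (D y)))\<^sup>2 \<le> A' * (Q y - Q (T (block_step a D B y))))"
    for y
  proof -
    define y1 where "y1 = block_step a D B y"
    define \<Delta> where "\<Delta> = Q y - Q (T y1)"
    have descent: "Q y1 \<le> Q y - c * (norm (y1 - y))\<^sup>2"
      unfolding Q_def y1_def c_def using block_step_descent[OF \<open>a > 0\<close>] .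
    moreover have "c * (norm (y1 - y))\<^sup>2 \<ge> 0" using \<open>c > 0\<close> by simp
    ultimately have "Q y1 - Q (T y1) \<le> \<Delta>" and "\<Delta> \<ge> 0"
      unfolding \<Delta>_def using T_le[of y1] by linarith+
    have step_small: "(norm (y1 - y))\<^sup>2 \<le> \<Delta> / c"
      using descent T_le[of y1] \<open>c > 0\<close> unfolding \<Delta>_def by (simp add: field_simps)
    have "(norm (block_restrict B' (D y)))\<^sup>2 \<le> A' * \<Delta>" if "B' \<in> set (B # Bs)" for B'
    proof (cases "B' = B")
      case True
      have "(norm (block_restrict B (D y)))\<^sup>2 \<le> 1 / (c * a\<^sup>2) * \<Delta>"
        using step_small power2_norm_block_step_diff[OF \<open>a > 0\<close>, of B y] \<open>a > 0\<close> \<open>c > 0\<close>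
        unfolding y1_def by (simp add: field_simps)
      also have "\<dots> \<le> A' * \<Delta>"
        unfolding A'_def using \<open>\<Delta> \<ge> 0\<close> \<open>A \<ge> 0\<close> \<open>c > 0\<close> by (intro mult_right_mono) auto
      finally show ?thesis using True by simp
    next
      case False
      hence "B' \<in> set Bs" using that by simp
      have "(norm (block_restrict B' (D y)))\<^sup>2
              \<le> 2 * (norm (block_restrict B' (D y1)))\<^sup>2 + 2 * L\<^sup>2 * (norm (y1 - y))\<^sup>2"
        by (rule power2_norm_block_restrict_shift_le)
      also have "\<dots> \<le> 2 * (A * \<Delta>) + 2 * L\<^sup>2 * (\<Delta> / c)"
        using IH[OF \<open>B' \<in> set Bs\<close>, of y1] \<open>Q y1 - Q (T y1) \<le> \<Delta>\<close> \<open>A \<ge> 0\<close> step_small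
        by (smt (verit) mult_left_mono zero_le_power2)
      also have "\<dots> \<le> A' * \<Delta>"
        unfolding A'_def using \<open>\<Delta> \<ge> 0\<close> \<open>c > 0\<close> by (simp add: algebra_simps)
      finally show ?thesis .
    qed
    thus ?thesis using \<open>\<Delta> \<ge> 0\<close> unfolding \<Delta>_def y1_def by simp
  qed
  ultimately show ?case unfolding Q_def T_def block_map_Cons by blast
qed

lemma block_map_quadratic_le:
  assumes "a > 0" and "a * L < 2" and "\<Union>(set Bs) = UNIV"
  shows "\<exists>g>0. \<forall>y. block_map a D Bs y \<bullet> D (block_map a D Bs y) \<le> (1 + g) * (y \<bullet> D y)"
proof -
  define Q where "Q y = y \<bullet> D y" for y
  define T where "T = block_map a D Bs"
  obtain A where "A \<ge> 0" and T_le: "\<And>y. Q (T y) \<le> Q y"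
    and blocks: "\<And>y B. B \<in> set Bs \<Longrightarrow> (norm (block_restrict B (D y)))\<^sup>2 \<le> A * (Q y - Q (T y))"
    using block_map_descent[OF assms(1,2)] unfolding Q_def T_def by blast
  obtain k where "k > 0" and k: "\<And>y. - Q y \<le> k * (norm (D y))\<^sup>2"
    using symmetric_operator_quadratic_le_norm_image[OF linear symmetric] unfolding Q_def by blast
  define A' where "A' = real (card (set Bs)) * A + 1"
  have "A' > 0" unfolding A'_def using \<open>A \<ge> 0\<close> by (simp add: add_nonneg_pos)
  define g where "g = 1 / (k * A')"
  have "g > 0" unfolding g_def using \<open>k > 0\<close> \<open>A' > 0\<close> by simp
  moreover have "Q (T y) \<le> (1 + g) * Q y" for y
  proof -
    have "(norm (D y))\<^sup>2 \<le> (\<Sum>B\<in>set Bs. (norm (block_restrict B (D y)))\<^sup>2)"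
      using norm_le_sum_block_restrict[OF assms(3)] .
    also have "\<dots> \<le> (\<Sum>B\<in>set Bs. A * (Q y - Q (T y)))" by (intro sum_mono blocks)
    also have "\<dots> \<le> A' * (Q y - Q (T y))"
      unfolding A'_def using T_le[of y] by (simp add: sum_distrib_left ring_distribs)
    finally have "k * (norm (D y))\<^sup>2 \<le> k * (A' * (Q y - Q (T y)))"
      using \<open>k > 0\<close> by simp
    hence "- Q y \<le> k * (A' * (Q y - Q (T y)))" using k[of y] by linarith
    thus ?thesis unfolding g_def using \<open>k > 0\<close> \<open>A' > 0\<close> by (simp add: field_simps)
  qed
  ultimately show ?thesis unfolding Q_def T_def by blast
qed

lemma block_map_iterates_grow:
  assumes "a > 0" and "a * L < 2" and "\<Union>(set Bs) = UNIV"
  shows "\<exists>g>0. \<forall>k. (1 + g) ^ k * - (y \<bullet> D y) \<le> L * (norm ((block_map a D Bs ^^ k) y))\<^sup>2"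
proof -
  define Q where "Q y = y \<bullet> D y" for y
  define T where "T = block_map a D Bs"
  obtain g where "g > 0" and g: "\<And>y. Q (T y) \<le> (1 + g) * Q y"
    using block_map_quadratic_le[OF assms] unfolding Q_def T_def by blast
  have iter: "Q ((T ^^ k) y) \<le> (1 + g) ^ k * Q y" for k
  proof (induction k)
    case (Suc k)
    have "Q ((T ^^ Suc k) y) \<le> (1 + g) * Q ((T ^^ k) y)"
      using g[of "(T ^^ k) y"] by (simp only: funpow.simps comp_apply)
    also have "\<dots> \<le> (1 + g) * ((1 + g) ^ k * Q y)"
      using Suc.IH \<open>g > 0\<close> by (intro mult_left_mono) auto
    finally show ?case by simp
  qed simp
  have "(1 + g) ^ k * - Q y \<le> L * (norm ((T ^^ k) y))\<^sup>2" for k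
    using iter[of k] neg_quadratic_le[of "(T ^^ k) y"] unfolding Q_def by linarith
  thus ?thesis using \<open>g > 0\<close> unfolding Q_def T_def by blast
qed

end

section \<open>Eigenvalues and growth of matrix powers\<close>

lemma nonneg_quadratic_linear_coeff_eq_0:
  fixes b c :: real
  assumes "\<And>t. 0 \<le> b * t + c * t\<^sup>2"
  shows "b = 0"
proof (rule ccontr)
  assume "b \<noteq> 0"
  define w where "w = \<bar>c\<bar> + 1"
  have "w > 0" "c < w" unfolding w_def by linarith+
  have "b * (- b / w) + c * (- b / w)\<^sup>2 = b\<^sup>2 / w\<^sup>2 * (c - w)"
    using \<open>w > 0\<close> by (simp add: field_simps power2_eq_square)
  also have "\<dots> < 0" using \<open>b \<noteq> 0\<close> \<open>c < w\<close> \<open>w > 0\<close> by (intro mult_pos_neg) auto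
  finally show False using assms[of "- b / w"] by linarith
qed

lemma symmetric_operator_has_eigenvector:
  fixes D :: "'a::euclidean_space \<Rightarrow> 'a"
  assumes lin: "linear D" and sym: "\<And>u v. D u \<bullet> v = u \<bullet> D v"
  shows "\<exists>\<mu> v. v \<noteq> 0 \<and> D v = \<mu> *\<^sub>R v"
proof -
  define Q where "Q y = y \<bullet> D y" for y
  have Q_scale: "Q (c *\<^sub>R y) = c\<^sup>2 * Q y" for c y
    unfolding Q_def by (simp add: linear_scale[OF lin] power2_eq_square)
  have "continuous_on (sphere 0 1) Q"
    unfolding Q_def using lin by (intro continuous_intros linear_continuous_on) (simp add: linear_conv_bounded_linear)
  then obtain x where "x \<in> sphere 0 1" and x_min: "\<And>y. y \<in> sphere 0 1 \<Longrightarrow> Q x \<le> Q y"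
    using continuous_attains_inf[of "sphere 0 1" Q] by (auto simp: sphere_eq_empty)
  define m where "m = Q x"
  have "x \<bullet> x = 1" using \<open>x \<in> sphere 0 1\<close> by (simp add: dot_square_norm)
  txt \<open>\<open>x\<close> minimizes the Rayleigh quotient, so \<open>Q z - m (z \<bullet> z)\<close> is a nonnegative form vanishing
    at \<open>x\<close>; its derivative at \<open>x\<close> in the direction of the residual \<open>r\<close> is \<open>2 (r \<bullet> r)\<close>.\<close>
  have nonneg: "Q z - m * (z \<bullet> z) \<ge> 0" for z
  proof (cases "z = 0")
    case False
    hence "m \<le> Q ((1 / norm z) *\<^sub>R z)" unfolding m_def by (intro x_min) simp
    hence "m * (norm z)\<^sup>2 \<le> (norm z)\<^sup>2 * Q ((1 / norm z) *\<^sub>R z)"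
      by (metis mult.commute mult_right_mono zero_le_power2)
    also have "\<dots> = Q z" using False by (simp add: Q_scale power2_eq_square)
    finally show ?thesis by (simp add: dot_square_norm)
  qed (simp add: Q_def)
  define r where "r = D x - m *\<^sub>R x"
  define c where "c = Q r - m * (r \<bullet> r)"
  have expand: "Q (x + t *\<^sub>R r) - m * ((x + t *\<^sub>R r) \<bullet> (x + t *\<^sub>R r)) = 2 * t * (r \<bullet> r) + t\<^sup>2 * c" for t
  proof -
    have "x \<bullet> D r = r \<bullet> D x" using sym[of x r] by (simp add: inner_commute)
    moreover have "r \<bullet> D x = r \<bullet> (r + m *\<^sub>R x)" unfolding r_def by simp
    hence "r \<bullet> D x = r \<bullet> r + m * (x \<bullet> r)" by (simp add: inner_add_right inner_commute)
    ultimately show ?thesis using \<open>x \<bullet> x = 1\<close> unfolding Q_def c_def m_def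
      by (simp add: linear_add[OF lin] linear_scale[OF lin] inner_add_left inner_add_right
          inner_commute power2_eq_square algebra_simps)
  qed
  have "0 \<le> 2 * (r \<bullet> r) * t + c * t\<^sup>2" for t
    using nonneg[of "x + t *\<^sub>R r"] expand[of t] by (simp add: mult_ac)
  hence "r = 0" using nonneg_quadratic_linear_coeff_eq_0 by fastforce
  moreover have "x \<noteq> 0" using \<open>x \<bullet> x = 1\<close> by auto
  ultimately show ?thesis unfolding r_def by auto
qed

text \<open>Matrices over a finite index type are transported to the matrices of
  \<open>Jordan_Normal_Form\<close> along a fixed enumeration of the index type.\<close>

definition enum_index :: "nat \<Rightarrow> 'n::finite" where
  "enum_index = (SOME e. bij_betw e {..<CARD('n)} UNIV)"

definition jnf_mat :: "real^'n^'n \<Rightarrow> complex mat" where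
  "jnf_mat A = Matrix.mat CARD('n) CARD('n) (\<lambda>(i, j). complex_of_real (A $ enum_index i $ enum_index j))"

definition jnf_vec :: "complex^'n \<Rightarrow> complex Matrix.vec" where
  "jnf_vec w = Matrix.vec CARD('n) (\<lambda>i. w $ enum_index i)"

definition complexify :: "real^'n \<Rightarrow> complex^'n" where
  "complexify y = (\<chi> i. complex_of_real (y $ i))"

lemma bij_enum_index: "bij_betw (enum_index :: nat \<Rightarrow> 'n::finite) {..<CARD('n)} UNIV"
proof -
  have "\<exists>e. bij_betw e {..<CARD('n)} (UNIV :: 'n set)"
    using ex_bij_betw_nat_finite[of "UNIV :: 'n set"] by (simp add: lessThan_atLeast0)
  thus ?thesis unfolding enum_index_def by (rule someI_ex)
qed

lemma ex_enum_index: "\<exists>i<CARD('n). enum_index i = (l :: 'n::finite)"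
proof -
  have "l \<in> enum_index ` {..<CARD('n)}" using bij_enum_index[where 'n = 'n] unfolding bij_betw_def by simp
  thus ?thesis by auto
qed

lemma jnf_mat_carrier: "jnf_mat (A :: real^'n^'n) \<in> carrier_mat CARD('n) CARD('n)"
  unfolding jnf_mat_def by simp

lemma jnf_vec_carrier: "jnf_vec (w :: complex^'n) \<in> carrier_vec CARD('n)"
  unfolding jnf_vec_def by simp

lemma index_jnf_vec: "i < CARD('n) \<Longrightarrow> jnf_vec (w :: complex^'n) $ i = w $ enum_index i"
  unfolding jnf_vec_def by simp

lemma jnf_vec_zero: "jnf_vec (0 :: complex^'n) = 0\<^sub>v CARD('n)"
  by (rule eq_vecI) (simp_all add: jnf_vec_def)

lemma jnf_vec_scale: "jnf_vec (c *s (w :: complex^'n)) = c \<cdot>\<^sub>v jnf_vec w"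
  by (rule eq_vecI) (simp_all add: jnf_vec_def)

lemma jnf_vec_inject: "jnf_vec (v :: complex^'n) = jnf_vec w \<longleftrightarrow> v = w"
proof
  assume eq: "jnf_vec v = jnf_vec w"
  show "v = w"
  proof (rule Finite_Cartesian_Product.vec_eq_iff[THEN iffD2], rule allI)
    fix l :: 'n
    obtain i where "i < CARD('n)" "enum_index i = l" using ex_enum_index by blast
    thus "v $ l = w $ l" using eq index_jnf_vec[of i v] index_jnf_vec[of i w] by metis
  qed
qed simp

lemma jnf_vec_surj:
  assumes "v \<in> carrier_vec CARD('n::finite)"
  shows "\<exists>w :: complex^'n. jnf_vec w = v"
proof -
  have inj: "inj_on (enum_index :: nat \<Rightarrow> 'n) {..<CARD('n)}"
    using bij_enum_index bij_betw_imp_inj_on by blast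
  define w :: "complex^'n" where "w = (\<chi> l. v $ inv_into {..<CARD('n)} enum_index l)"
  have "jnf_vec w = v"
    by (rule eq_vecI) (use assms inv_into_f_f[OF inj] in \<open>auto simp: jnf_vec_def w_def\<close>)
  thus ?thesis by blast
qed

lemma jnf_mat_mult_vec:
  "jnf_mat (A :: real^'n^'n) *\<^sub>v jnf_vec w = jnf_vec (map_matrix complex_of_real A *v w)"
proof (rule eq_vecI)
  fix i assume "i < dim_vec (jnf_vec (map_matrix complex_of_real A *v w))"
  hence "i < CARD('n)" by (simp add: jnf_vec_def)
  hence "(jnf_mat A *\<^sub>v jnf_vec w) $ i
           = (\<Sum>j<CARD('n). complex_of_real (A $ enum_index i $ enum_index j) * w $ enum_index j)"
    by (simp add: jnf_mat_def jnf_vec_def scalar_prod_def lessThan_atLeast0)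
  also have "\<dots> = (\<Sum>l\<in>UNIV. complex_of_real (A $ enum_index i $ l) * w $ l)"
    using sum.reindex_bij_betw[OF bij_enum_index] by simp
  also have "\<dots> = jnf_vec (map_matrix complex_of_real A *v w) $ i"
    using \<open>i < CARD('n)\<close> by (simp add: jnf_vec_def matrix_vector_mult_def)
  finally show "(jnf_mat A *\<^sub>v jnf_vec w) $ i = jnf_vec (map_matrix complex_of_real A *v w) $ i" .
qed (simp add: jnf_mat_def jnf_vec_def)

lemma complexify_mult: "map_matrix complex_of_real A *v complexify y = complexify (A *v y)"
  by (simp add: Finite_Cartesian_Product.vec_eq_iff complexify_def matrix_vector_mult_def)

lemma jnf_mat_power_mult_vec:
  "jnf_mat (A :: real^'n^'n) ^\<^sub>m k *\<^sub>v jnf_vec (complexify y) = jnf_vec (complexify (((*v) A ^^ k) y))"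
proof (induction k arbitrary: y)
  case 0
  show ?case using jnf_vec_carrier[of "complexify y"] by (simp add: jnf_mat_def)
next
  case (Suc k)
  have "jnf_mat A ^\<^sub>m Suc k *\<^sub>v jnf_vec (complexify y)
          = jnf_mat A ^\<^sub>m k *\<^sub>v (jnf_mat A *\<^sub>v jnf_vec (complexify y))"
    by (simp add: assoc_mult_mat_vec[OF pow_carrier_mat[OF jnf_mat_carrier] jnf_mat_carrier jnf_vec_carrier])
  also have "\<dots> = jnf_vec (complexify (((*v) A ^^ k) (A *v y)))"
    by (simp add: jnf_mat_mult_vec complexify_mult Suc.IH)
  finally show ?case by (simp add: funpow_Suc_right del: funpow.simps)
qed

lemma complex_eigenvalue_if_eigenvalue_jnf_mat:
  assumes "eigenvalue (jnf_mat (A :: real^'n^'n)) \<mu>"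
  shows "complex_eigenvalue A \<mu>"
proof -
  obtain v where v: "v \<in> carrier_vec CARD('n)" "v \<noteq> 0\<^sub>v CARD('n)" "jnf_mat A *\<^sub>v v = \<mu> \<cdot>\<^sub>v v"
    using assms unfolding eigenvalue_def eigenvector_def by (auto simp: jnf_mat_def)
  obtain w :: "complex^'n" where w: "jnf_vec w = v" using jnf_vec_surj[OF v(1)] by blast
  have "map_matrix complex_of_real A *v w = \<mu> *s w"
    using v(3) w jnf_vec_inject by (metis jnf_mat_mult_vec jnf_vec_scale)
  moreover have "w \<noteq> 0" using v(2) w jnf_vec_zero by auto
  ultimately show ?thesis unfolding complex_eigenvalue_def by blast
qed

lemma eigenvalue_jnf_mat_if_real_eigenvalue:
  assumes "real_eigenvalue (A :: real^'n^'n) \<mu>"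
  shows "eigenvalue (jnf_mat A) (complex_of_real \<mu>)"
proof -
  obtain v where "v \<noteq> 0" and v: "A *v v = \<mu> *s v" using assms unfolding real_eigenvalue_def by blast
  have "complexify v \<noteq> 0"
    using \<open>v \<noteq> 0\<close> by (simp add: complexify_def Finite_Cartesian_Product.vec_eq_iff)
  hence "jnf_vec (complexify v) \<noteq> 0\<^sub>v CARD('n)" by (metis jnf_vec_inject jnf_vec_zero)
  moreover have "complexify (\<mu> *s v) = complex_of_real \<mu> *s complexify v"
    by (simp add: Finite_Cartesian_Product.vec_eq_iff complexify_def)
  hence "jnf_mat A *\<^sub>v jnf_vec (complexify v) = complex_of_real \<mu> \<cdot>\<^sub>v jnf_vec (complexify v)"
    by (simp add: jnf_mat_mult_vec complexify_mult v jnf_vec_scale)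
  ultimately show ?thesis
    unfolding eigenvalue_def eigenvector_def using jnf_vec_carrier by (auto simp: jnf_mat_def)
qed

lemma finite_real_eigenvalues: "finite {\<mu>. real_eigenvalue (A :: real^'n^'n) \<mu>}"
proof -
  have "complex_of_real ` {\<mu>. real_eigenvalue A \<mu>} \<subseteq> spectrum (jnf_mat A)"
    using eigenvalue_jnf_mat_if_real_eigenvalue unfolding spectrum_def by auto
  hence "finite (complex_of_real ` {\<mu>. real_eigenvalue A \<mu>})"
    using card_finite_spectrum(1)[OF jnf_mat_carrier] finite_subset by blast
  thus ?thesis by (rule finite_imageD) (simp add: inj_on_def)
qed

lemma negative_curvature_if_lambda_min_neg:
  fixes H :: "real^'n^'n"
  assumes "\<And>u v. (H *v u) \<bullet> v = u \<bullet> (H *v v)" and "lambda_min H < 0"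
  shows "\<exists>v. v \<bullet> (H *v v) < 0"
proof -
  have "{\<mu>. real_eigenvalue H \<mu>} \<noteq> {}"
    using symmetric_operator_has_eigenvector[OF matrix_vector_mul_linear assms(1)]
    unfolding real_eigenvalue_def by (auto simp: scalar_mult_eq_scaleR)
  hence "real_eigenvalue H (lambda_min H)"
    unfolding lambda_min_def using Min_in[OF finite_real_eigenvalues] by blast
  then obtain v where "v \<noteq> 0" and v: "H *v v = lambda_min H *s v"
    unfolding real_eigenvalue_def by blast
  have "v \<bullet> (H *v v) = lambda_min H * (v \<bullet> v)" unfolding v by (simp add: scalar_mult_eq_scaleR)
  also have "\<dots> < 0" using \<open>v \<noteq> 0\<close> assms(2) by (simp add: mult_neg_pos)
  finally show ?thesis ..
qed

lemma norm_mult_mat_vec_index_le: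
  fixes X :: "'a::real_normed_field mat"
  assumes "X \<in> carrier_mat m n" and "norm_bound X b" and "i < m" and "x \<in> carrier_vec n"
  shows "norm ((X *\<^sub>v x) $ i) \<le> b * (\<Sum>j<n. norm (x $ j))"
proof -
  have "norm ((X *\<^sub>v x) $ i) = norm (\<Sum>j<n. X $$ (i, j) * x $ j)"
    using assms by (simp add: scalar_prod_def lessThan_atLeast0)
  also have "\<dots> \<le> (\<Sum>j<n. norm (X $$ (i, j)) * norm (x $ j))"
    by (rule order_trans[OF norm_sum]) (simp add: norm_mult)
  also have "\<dots> \<le> (\<Sum>j<n. b * norm (x $ j))"
    using assms unfolding norm_bound_def by (intro sum_mono mult_right_mono) auto
  finally show ?thesis by (simp add: sum_distrib_left)
qed

lemma iterates_polynomially_bounded: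
  fixes J :: "real^'n^'n"
  assumes "\<And>\<mu>. complex_eigenvalue J \<mu> \<Longrightarrow> cmod \<mu> \<le> 1"
  shows "\<exists>C p. \<forall>k\<ge>1. norm (((*v) J ^^ k) y) \<le> C * real k ^ p"
proof -
  have "spectral_radius (jnf_mat J) \<le> 1"
  proof -
    obtain \<mu> where "\<mu> \<in> spectrum (jnf_mat J)" and "spectral_radius (jnf_mat J) = cmod \<mu>"
      using spectral_radius_mem_max(1)[OF jnf_mat_carrier] by auto
    moreover from this(1) have "complex_eigenvalue J \<mu>"
      unfolding spectrum_def by (auto intro: complex_eigenvalue_if_eigenvalue_jnf_mat)
    ultimately show ?thesis using assms by simp
  qed
  then obtain c1 c2 where bound: "\<And>k. norm_bound (jnf_mat J ^\<^sub>m k) (c1 + c2 * real k ^ (CARD('n) - 1))"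
    using spectral_radius_jnf_norm_bound_le_1_upper_triangular[OF jnf_mat_carrier] by blast
  define p where "p = CARD('n) - 1"
  define S where "S = (\<Sum>j<CARD('n). cmod (jnf_vec (complexify y) $ j))"
  define C where "C = real CARD('n) * ((\<bar>c1\<bar> + \<bar>c2\<bar>) * S)"
  have "norm (((*v) J ^^ k) y) \<le> C * real k ^ p" if "k \<ge> 1" for k
  proof -
    have entry: "\<bar>((*v) J ^^ k) y $ l\<bar> \<le> (c1 + c2 * real k ^ p) * S" for l
    proof -
      obtain i where "i < CARD('n)" "enum_index i = l" using ex_enum_index by blast
      hence "\<bar>((*v) J ^^ k) y $ l\<bar> = cmod ((jnf_mat J ^\<^sub>m k *\<^sub>v jnf_vec (complexify y)) $ i)"
        unfolding jnf_mat_power_mult_vec by (simp add: index_jnf_vec complexify_def)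
      also have "\<dots> \<le> (c1 + c2 * real k ^ p) * S"
        unfolding S_def p_def using \<open>i < CARD('n)\<close>
        by (rule norm_mult_mat_vec_index_le[OF pow_carrier_mat[OF jnf_mat_carrier] bound _ jnf_vec_carrier])
      finally show ?thesis .
    qed
    have "S \<ge> 0" unfolding S_def by (simp add: sum_nonneg)
    have "c1 + c2 * real k ^ p \<le> (\<bar>c1\<bar> + \<bar>c2\<bar>) * real k ^ p"
    proof -
      have "1 \<le> real k ^ p" using \<open>k \<ge> 1\<close> by simp
      hence "c1 \<le> \<bar>c1\<bar> * real k ^ p" by (metis abs_ge_self abs_ge_zero mult_left_mono mult.right_neutral order_trans)
      moreover have "c2 * real k ^ p \<le> \<bar>c2\<bar> * real k ^ p" by (intro mult_right_mono) auto
      ultimately show ?thesis by (simp add: distrib_right)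
    qed
    hence "(c1 + c2 * real k ^ p) * S \<le> (\<bar>c1\<bar> + \<bar>c2\<bar>) * real k ^ p * S"
      using \<open>S \<ge> 0\<close> by (rule mult_right_mono)
    have "norm (((*v) J ^^ k) y) \<le> (\<Sum>l\<in>UNIV. \<bar>((*v) J ^^ k) y $ l\<bar>)" by (rule norm_le_l1_cart)
    also have "\<dots> \<le> (\<Sum>l\<in>(UNIV :: 'n set). (\<bar>c1\<bar> + \<bar>c2\<bar>) * real k ^ p * S)"
      using entry \<open>(c1 + c2 * real k ^ p) * S \<le> _\<close> by (intro sum_mono) (meson order_trans)
    also have "\<dots> = C * real k ^ p" unfolding C_def by simp
    finally show ?thesis .
  qed
  thus ?thesis by blast
qed

lemma exponential_not_polynomially_bounded:
  fixes g q C :: real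
  assumes "g > 0" and "q > 0" and bound: "\<And>k. k \<ge> 1 \<Longrightarrow> (1 + g) ^ k * q \<le> C * real k ^ p"
  shows False
proof -
  have "(\<lambda>k. real k ^ p / (1 + g) ^ k) \<longlonglongrightarrow> 0" using \<open>g > 0\<close> by real_asymp
  moreover have "q / (\<bar>C\<bar> + 1) > 0" using \<open>q > 0\<close> by (simp add: add_nonneg_pos)
  ultimately obtain k where "k \<ge> 1" and k: "real k ^ p / (1 + g) ^ k < q / (\<bar>C\<bar> + 1)"
    by (metis (no_types, lifting) eventually_sequentially order_tendstoD(2) le_cases order.refl)
  have "(\<bar>C\<bar> + 1) * real k ^ p < q * (1 + g) ^ k"
    using k \<open>g > 0\<close> by (simp add: field_simps add_nonneg_pos)
  moreover have "C * real k ^ p \<le> (\<bar>C\<bar> + 1) * real k ^ p" by (intro mult_right_mono) auto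
  ultimately show False using bound[OF \<open>k \<ge> 1\<close>] by (simp add: mult.commute)
qed

theorem proposition3:
  fixes f :: "real^'n \<Rightarrow> real" and gf :: "real^'n \<Rightarrow> real^'n"
    and L \<alpha> :: real and Bs :: "'n set list" and xs :: "real^'n"
  assumes "twice_cont_diff f gf"
    and "L > 0" and "lipschitz_grad L gf"
    and "0 < \<alpha>" and "\<alpha> < 1 / L"
    and "block_partition Bs"
    and "strict_saddle gf xs"
  shows "\<exists>\<mu>. complex_eigenvalue (jacobian (block_map \<alpha> gf Bs) (at xs)) \<mu> \<and> cmod \<mu> > 1"
proof (rule ccontr)
  assume no_expanding: "\<not> ?thesis"
  define H where "H = jacobian gf (at xs)"
  define T where "T = block_map \<alpha> ((*v) H) Bs"
  have grad: "\<And>x. GDERIV f x :> gf x" and deriv: "(gf has_derivative (*v) H) (at xs)"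
    using assms(1) jacobian_works unfolding twice_cont_diff_def H_def by blast+
  interpret bounded_symmetric_operator "(*v) H" L
    using assms(3) unfolding lipschitz_grad_def
    by (intro bounded_symmetric_operator.intro matrix_vector_mul_linear
        gradient_derivative_symmetric[OF grad deriv] has_derivative_norm_le_lipschitz[OF deriv]) auto
  have jacobian: "(*v) (jacobian (block_map \<alpha> gf Bs) (at xs)) = T"
    using jacobian_block_map[OF deriv] assms(7) unfolding strict_saddle_def T_def by auto
  obtain v where negative: "v \<bullet> (H *v v) < 0"
    using negative_curvature_if_lambda_min_neg symmetric assms(7)
    unfolding strict_saddle_def H_def by blast
  obtain g where "g > 0" and grow: "\<And>k. (1 + g) ^ k * - (v \<bullet> (H *v v)) \<le> L * (norm ((T ^^ k) v))\<^sup>2"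
    using block_map_iterates_grow[of \<alpha> Bs v] assms(2,4,5,6)
    unfolding T_def block_partition_def by (auto simp: field_simps)
  obtain C p where poly: "\<And>k. k \<ge> 1 \<Longrightarrow> norm ((T ^^ k) v) \<le> C * real k ^ p"
    using iterates_polynomially_bounded[of "jacobian (block_map \<alpha> gf Bs) (at xs)" v] no_expanding
    unfolding jacobian by (auto simp: not_less)
  have "(1 + g) ^ k * - (v \<bullet> (H *v v)) \<le> (L * C\<^sup>2) * real k ^ (2 * p)" if "k \<ge> 1" for k
  proof -
    have "(norm ((T ^^ k) v))\<^sup>2 \<le> C\<^sup>2 * real k ^ (2 * p)"
      using power_mono[OF poly[OF that] norm_ge_zero, of 2] by (simp add: power_mult_distrib power_even_eq)
    thus ?thesis using grow[of k] \<open>L > 0\<close> by (smt (verit) mult_left_mono mult.assoc)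
  qed
  then show False
    using exponential_not_polynomially_bounded[of g "- (v \<bullet> (H *v v))"] \<open>g > 0\<close> negative by auto
qed

end
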